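(* In the transductive setting, let $H$ be a hypothesis set bounded by $B$ and $L$ a uniformly $\beta$-cost-stable algorithm whose returned hypotheses lie in $H$. Let $h$ be the hypothesis returned by $L$ when trained on the random training set $S$ (with test set $T=X\setminus S$). Then for any $\delta>0$, with probability at least $1-\delta$ over the choice of $S$, $$R(h)\le\widehat R(h)+\beta+\Big(2\beta+\frac{B^2(m+u)}{mu}\Big)\sqrt{\frac{\alpha(m,u)\ln\frac1\delta}{2}},\qquad \alpha(m,u)=\frac{mu}{m+u-1/2}\cdot\frac{1}{1-1/(2\max\{m,u\})}.$$
   Context: Transductive setting: a fixed full sample $X=\{x_1,\dots,x_{m+u}\}$ of $m+u$ points, each with a real label $y(x)$. A training set $S\subset X$ of size $m$ is drawn uniformly at random without replacement, its labels are revealed, and $T=X\setminus S$ (of size $u$) is the test set. An algorithm $L$ maps $S$ (with labels) and $T$ to a hypothesis $h_S\colon X\to\mathbb{R}$. Loss: $c(h,x)=(h(x)-y(x))^2$. Training error $\widehat R(h)=\frac1m\sum_{x\in S}c(h,x)$, test error $R(h)=\frac1u\sum_{x\in T}c(h,x)$. Two training sets $S,S'$ differ in exactly one point if $S'=(S\setminus\{x\})\cup\{x'\}$ with $x\in S$, $x'\in X\setminus S$. $L$ is uniformly $\beta$-cost-stable if for all such pairs $S,S'$ and all $x\in X$, $|c(h_{S'},x)-c(h_S,x)|\le\beta$. A hypothesis set $H$ is bounded by $B>0$ if $|h(x)-y(x)|\le B$ for all $h\in H$, $x\in X$. *)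

theory Defs
  imports "HOL-Probability.Probability"
begin

definition cost :: "('a \<Rightarrow> real) \<Rightarrow> ('a \<Rightarrow> real) \<Rightarrow> 'a \<Rightarrow> real" where
  "cost y h x = (h x - y x)^2"

definition train_err :: "('a \<Rightarrow> real) \<Rightarrow> 'a set \<Rightarrow> ('a \<Rightarrow> real) \<Rightarrow> real" where
  "train_err y S h = (\<Sum>x\<in>S. cost y h x) / real (card S)"

definition test_err :: "('a \<Rightarrow> real) \<Rightarrow> 'a set \<Rightarrow> 'a set \<Rightarrow> ('a \<Rightarrow> real) \<Rightarrow> real" where
  "test_err y X S h = (\<Sum>x\<in>X - S. cost y h x) / real (card (X - S))"

definition train_sets :: "'a set \<Rightarrow> nat \<Rightarrow> 'a set set" where
  "train_sets X m = {S. S \<subseteq> X \<and> card S = m}"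

definition differ_one :: "'a set \<Rightarrow> 'a set \<Rightarrow> 'a set \<Rightarrow> bool" where
  "differ_one X S S' \<longleftrightarrow> (\<exists>x x'. x \<in> S \<and> x' \<in> X - S \<and> S' = (S - {x}) \<union> {x'})"

text \<open>Uniform beta-cost-stability of the algorithm L (labels are fixed, so L is a
  function of the training set S; the test set is X - S).\<close>
definition cost_stable ::
  "('a \<Rightarrow> real) \<Rightarrow> 'a set \<Rightarrow> nat \<Rightarrow> ('a set \<Rightarrow> 'a \<Rightarrow> real) \<Rightarrow> real \<Rightarrow> bool" where
  "cost_stable y X m L \<beta> \<longleftrightarrow>
     (\<forall>S\<in>train_sets X m. \<forall>S'. differ_one X S S' \<longrightarrow>
        (\<forall>x\<in>X. \<bar>cost y (L S') x - cost y (L S) x\<bar> \<le> \<beta>))"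

definition bounded_hyp :: "('a \<Rightarrow> real) \<Rightarrow> 'a set \<Rightarrow> ('a \<Rightarrow> real) set \<Rightarrow> real \<Rightarrow> bool" where
  "bounded_hyp y X H B \<longleftrightarrow> (\<forall>h\<in>H. \<forall>x\<in>X. \<bar>h x - y x\<bar> \<le> B)"

definition alpha :: "nat \<Rightarrow> nat \<Rightarrow> real" where
  "alpha m u = (real m * real u / (real m + real u - 1/2)) * (1 / (1 - 1 / (2 * real (max m u))))"

end

theory Submission
  imports Defs
begin

text \<open>
  Let \<open>\<Phi>(S)\<close> be the generalisation gap (test error minus training error) of the
  hypothesis trained on \<open>S\<close>, where \<open>S\<close> is uniform among the \<open>m\<close>-subsets of \<open>X\<close>.
  The theorem says \<open>\<Phi>(S) \<le> \<beta> + \<epsilon>\<close> with probability at least \<open>1 - \<delta>\<close>; it follows from: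
  (1) the average of \<open>\<Phi>\<close> over all training sets is at most \<open>\<beta>\<close> (double counting over
      all exchanges of a training point with a test point), and
  (2) \<open>\<Phi>\<close> changes by at most \<open>C = 2\<beta> + B\<^sup>2/m + B\<^sup>2/u\<close> when one point is exchanged, hence
      obeys a McDiarmid-type inequality for sampling without replacement.
\<close>

definition avg :: "'b set \<Rightarrow> ('b \<Rightarrow> real) \<Rightarrow> real" where
  "avg A f = (\<Sum>x\<in>A. f x) / real (card A)"

lemma avg_reindex:
  assumes "bij_betw \<phi> A B"
  shows "avg A (\<lambda>a. f (\<phi> a)) = avg B f"
  using sum.reindex_bij_betw[OF assms, of f] bij_betw_same_card[OF assms]
  by (simp add: avg_def)

lemma card_filter_reindex:
  assumes "bij_betw \<phi> A B"
  shows "card {a\<in>A. P (\<phi> a)} = card {b\<in>B. P b}"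
proof -
  have "{b\<in>B. P b} = \<phi> ` {a\<in>A. P (\<phi> a)}" and "inj_on \<phi> {a\<in>A. P (\<phi> a)}"
    using assms by (auto simp: bij_betw_def inj_on_def)
  then show ?thesis by (simp add: card_image)
qed

lemma avg_diff: "avg A (\<lambda>x. f x - g x) = avg A f - avg A g"
  by (simp add: avg_def sum_subtractf diff_divide_distrib)

lemma avg_mono: "(\<And>x. x \<in> A \<Longrightarrow> f x \<le> g x) \<Longrightarrow> avg A f \<le> avg A g"
  unfolding avg_def by (intro divide_right_mono sum_mono) auto

lemma avg_mult_const: "avg A (\<lambda>x. f x * c) = avg A f * c"
  by (simp add: avg_def sum_distrib_right)

lemma train_sets_finite: "finite X \<Longrightarrow> finite (train_sets X k)"
  unfolding train_sets_def by (rule finite_subset[of _ "Pow X"]) auto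

lemma train_sets_card: "finite X \<Longrightarrow> card (train_sets X k) = card X choose k"
  unfolding train_sets_def by (rule n_subsets)

lemma train_sets_nonempty: "finite X \<Longrightarrow> k \<le> card X \<Longrightarrow> train_sets X k \<noteq> {}"
  using obtain_subset_with_card_n[of k X] unfolding train_sets_def by blast

lemma train_setD:
  assumes "finite X" "S \<in> train_sets X k"
  shows "S \<subseteq> X" "finite S" "card S = k" "card (X - S) = card X - k"
proof -
  show "S \<subseteq> X" "finite S" "card S = k"
    using assms by (auto simp: train_sets_def intro: finite_subset)
  then show "card (X - S) = card X - k" by (simp add: card_Diff_subset)
qed

lemma differ_one_train_sets:
  assumes "finite X" "S \<in> train_sets X k" "differ_one X S S'"
  shows "S' \<in> train_sets X k"
proof -
  obtain x x' where "x \<in> S" "x' \<in> X - S" "S' = insert x' (S - {x})"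
    using assms(3) unfolding differ_one_def by auto
  moreover have "card (insert x' (S - {x})) = card S"
  proof -
    have "finite S" using train_setD(2)[OF assms(1,2)] .
    moreover have "x' \<notin> S - {x}" using \<open>x' \<in> X - S\<close> by blast
    ultimately have "card (insert x' (S - {x})) = Suc (card (S - {x}))" by simp
    also have "\<dots> = card S" using \<open>finite S\<close> \<open>x \<in> S\<close> by (rule card_Suc_Diff1)
    finally show ?thesis .
  qed
  ultimately show ?thesis
    using train_setD(1,3)[OF assms(1,2)] by (auto simp: train_sets_def)
qed

lemma compl_bij:
  assumes X: "finite X" "card X = m + u"
  shows "bij_betw (\<lambda>T. X - T) (train_sets X u) (train_sets X m)"
proof (rule bij_betwI[where g = "\<lambda>T. X - T"])
  have compl: "X - T \<in> train_sets X (card X - k)" if "T \<in> train_sets X k" for T k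
    using train_setD(4)[OF X(1) that] by (simp add: train_sets_def)
  show "(\<lambda>T. X - T) \<in> train_sets X u \<rightarrow> train_sets X m"
    using compl[of _ u] X(2) by (simp add: Pi_iff)
  show "(\<lambda>T. X - T) \<in> train_sets X m \<rightarrow> train_sets X u"
    using compl[of _ m] X(2) by (simp add: Pi_iff)
qed (auto simp: train_sets_def)

text \<open>Double counting: choosing a \<open>(k+1)\<close>-set is choosing a first point \<open>a\<close> and a
  \<open>k\<close>-subset of the rest, each \<open>(k+1)\<close>-set arising \<open>k+1\<close> times.\<close>
lemma sum_train_sets_insert:
  assumes X: "finite X"
  shows "(\<Sum>a\<in>X. \<Sum>S'\<in>train_sets (X - {a}) k. F (insert a S'))
       = real (Suc k) * (\<Sum>S\<in>train_sets X (Suc k). F S)"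
proof -
  define A where "A = Sigma X (\<lambda>a. train_sets (X - {a}) k)"
  define B where "B = Sigma (train_sets X (Suc k)) (\<lambda>S. S)"
  have fin: "finite (train_sets (X - {a}) k)" for a using X by (simp add: train_sets_finite)
  have bij: "bij_betw (\<lambda>(a,S'). (insert a S', a)) A B"
  proof (rule bij_betwI[where g = "\<lambda>(S,a). (a, S - {a})"])
    show "(\<lambda>(a,S'). (insert a S', a)) \<in> A \<rightarrow> B"
      using X by (auto simp: A_def B_def train_sets_def intro: finite_subset card_insert_disjoint)
    show "(\<lambda>(S,a). (a, S - {a})) \<in> B \<rightarrow> A"
      using X by (auto simp: A_def B_def train_sets_def)
    show "(\<lambda>(S,a). (a, S - {a})) ((\<lambda>(a,S'). (insert a S', a)) p) = p" if "p \<in> A" for p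
      using that by (auto simp: A_def train_sets_def)
    show "(\<lambda>(a,S'). (insert a S', a)) ((\<lambda>(S,a). (a, S - {a})) q) = q" if "q \<in> B" for q
      using that by (auto simp: B_def)
  qed
  have "(\<Sum>a\<in>X. \<Sum>S'\<in>train_sets (X - {a}) k. F (insert a S')) = (\<Sum>p\<in>A. F (insert (fst p) (snd p)))"
    unfolding A_def using X fin by (simp add: sum.Sigma split_beta)
  also have "\<dots> = (\<Sum>q\<in>B. F (fst q))"
    using sum.reindex_bij_betw[OF bij, of "\<lambda>q. F (fst q)"] by (simp add: split_beta)
  also have "\<dots> = (\<Sum>S\<in>train_sets X (Suc k). \<Sum>a\<in>S. F S)"
    unfolding B_def using X
    by (subst sum.Sigma) (auto simp: train_sets_finite train_sets_def split_beta intro: finite_subset)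
  also have "\<dots> = (\<Sum>S\<in>train_sets X (Suc k). real (Suc k) * F S)"
    by (rule sum.cong) (auto simp: train_sets_def)
  finally show ?thesis by (simp add: sum_distrib_left)
qed

lemma avg_train_sets_insert:
  assumes X: "finite X" and k: "Suc k \<le> card X"
  shows "avg (train_sets X (Suc k)) F
       = avg X (\<lambda>a. avg (train_sets (X - {a}) k) (\<lambda>S'. F (insert a S')))"
proof -
  define N where "N = card X"
  define K where "K = real ((N - 1) choose k)"
  have cA: "card (train_sets (X - {a}) k) = (N - 1) choose k" if "a \<in> X" for a
    using X that by (simp add: train_sets_card N_def)
  have count: "real (Suc k) * real (card (train_sets X (Suc k))) = K * real N"
  proof -
    have "real (Suc k) * (\<Sum>S\<in>train_sets X (Suc k). 1) = (\<Sum>a\<in>X. \<Sum>S'\<in>train_sets (X - {a}) k. (1::real))"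
      using sum_train_sets_insert[OF X, where k=k and F="\<lambda>_. 1::real"] by simp
    also have "\<dots> = (\<Sum>a\<in>X. K)"
      by (rule sum.cong) (auto simp: cA K_def)
    finally show ?thesis by (simp add: N_def)
  qed
  have "avg X (\<lambda>a. avg (train_sets (X - {a}) k) (\<lambda>S'. F (insert a S')))
      = (\<Sum>a\<in>X. \<Sum>S'\<in>train_sets (X - {a}) k. F (insert a S')) / (K * real N)"
    unfolding avg_def N_def K_def
    by (simp add: cA sum_divide_distrib[symmetric] N_def cong: sum.cong)
  also have "\<dots> = real (Suc k) * (\<Sum>S\<in>train_sets X (Suc k). F S)
                   / (real (Suc k) * real (card (train_sets X (Suc k))))"
    by (simp only: count sum_train_sets_insert[OF X])
  also have "\<dots> = avg (train_sets X (Suc k)) F"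
    unfolding avg_def by simp
  finally show ?thesis by simp
qed


subsection \<open>Hoeffding's lemma and Chernoff's bound for uniform averages\<close>

lemma hoeffding_avg:
  fixes g :: "'b \<Rightarrow> real"
  assumes X: "finite X" "X \<noteq> {}" and l: "l > 0"
    and rng: "\<And>x. x \<in> X \<Longrightarrow> g x \<in> {a..b}"
  shows "avg X (\<lambda>x. exp (l * (g x - avg X g))) \<le> exp (l^2 * (b - a)^2 / 8)"
proof -
  interpret interval_bounded_random_variable "measure_pmf (pmf_of_set X)" g a b
  proof unfold_locales
    show "AE x in measure_pmf (pmf_of_set X). g x \<in> {a..b}"
      using X rng by (subst AE_measure_pmf_iff) auto
  qed simp
  have integral_avg: "integral\<^sup>L (measure_pmf (pmf_of_set X)) h = avg X h" for h :: "'b \<Rightarrow> real"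
    unfolding avg_def using integral_pmf_of_set[OF X(2,1)] by simp
  have "nn_integral (measure_pmf (pmf_of_set X)) (\<lambda>x. exp (l * (g x - measure_pmf.expectation (pmf_of_set X) g)))
      = ennreal (integral\<^sup>L (measure_pmf (pmf_of_set X)) (\<lambda>x. exp (l * (g x - measure_pmf.expectation (pmf_of_set X) g))))"
    using X by (intro nn_integral_eq_integral integrable_measure_pmf_finite) auto
  then have "ennreal (avg X (\<lambda>x. exp (l * (g x - avg X g))))
      = nn_integral (measure_pmf (pmf_of_set X)) (\<lambda>x. exp (l * (g x - measure_pmf.expectation (pmf_of_set X) g)))"
    using integral_avg[of g] by (simp add: integral_avg)
  also have "\<dots> \<le> ennreal (exp (l^2 * (b - a)^2 / 8))"
    by (rule Hoeffdings_lemma_nn_integral[OF l])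
  finally show ?thesis by simp
qed

lemma chernoff_count:
  assumes "finite T" "l \<ge> 0"
  shows "real (card {x\<in>T. h x \<ge> \<epsilon>}) \<le> avg T (\<lambda>x. exp (l * h x)) * real (card T) * exp (- l * \<epsilon>)"
proof -
  have "real (card {x\<in>T. h x \<ge> \<epsilon>}) = (\<Sum>x\<in>{x\<in>T. h x \<ge> \<epsilon>}. 1)" by simp
  also have "\<dots> \<le> (\<Sum>x\<in>{x\<in>T. h x \<ge> \<epsilon>}. exp (l * h x) * exp (- l * \<epsilon>))"
  proof (rule sum_mono)
    fix x assume "x \<in> {x\<in>T. h x \<ge> \<epsilon>}"
    then have "0 \<le> l * h x + - l * \<epsilon>"
      using \<open>l \<ge> 0\<close> mult_left_mono[of \<epsilon> "h x" l] by auto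
    then show "1 \<le> exp (l * h x) * exp (- l * \<epsilon>)"
      by (simp only: one_le_exp_iff mult_exp_exp)
  qed
  also have "\<dots> \<le> (\<Sum>x\<in>T. exp (l * h x) * exp (- l * \<epsilon>))"
    using assms(1) by (intro sum_mono2) auto
  also have "\<dots> = (\<Sum>x\<in>T. exp (l * h x)) * exp (- l * \<epsilon>)"
    by (rule sum_distrib_right[symmetric])
  also have "\<dots> = avg T (\<lambda>x. exp (l * h x)) * real (card T) * exp (- l * \<epsilon>)"
    using assms(1) by (cases "T = {}") (simp_all add: avg_def)
  finally show ?thesis .
qed

definition bd_diff :: "'a set \<Rightarrow> nat \<Rightarrow> ('a set \<Rightarrow> real) \<Rightarrow> real \<Rightarrow> bool" where
  "bd_diff X k f c \<longleftrightarrow> (\<forall>S\<in>train_sets X k. \<forall>S'. differ_one X S S' \<longrightarrow> \<bar>f S' - f S\<bar> \<le> c)"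

lemma bd_diff_insert:
  assumes X: "finite X" and a: "a \<in> X" and bd: "bd_diff X (Suc k) f c"
  shows "bd_diff (X - {a}) k (\<lambda>S. f (insert a S)) c"
  unfolding bd_diff_def
proof (intro ballI allI impI)
  fix S S' assume S: "S \<in> train_sets (X - {a}) k" and d: "differ_one (X - {a}) S S'"
  then obtain x x' where xx: "x \<in> S" "x' \<in> X - {a} - S" "S' = S - {x} \<union> {x'}"
    unfolding differ_one_def by blast
  have aS: "a \<notin> S" and fS: "finite S"
    using S X by (auto simp: train_sets_def intro: finite_subset)
  have "insert a S \<in> train_sets X (Suc k)"
    using S aS fS a by (auto simp: train_sets_def)
  moreover have "differ_one X (insert a S) (insert a S')"
    unfolding differ_one_def using xx aS by (intro exI[of _ x] exI[of _ x']) auto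
  ultimately show "\<bar>f (insert a S') - f (insert a S)\<bar> \<le> c"
    using bd unfolding bd_diff_def by blast
qed

lemma bd_diff_compl:
  assumes X: "finite X" "card X = m + u" and bd: "bd_diff X m f c"
  shows "bd_diff X u (\<lambda>T. f (X - T)) c"
  unfolding bd_diff_def
proof (intro ballI allI impI)
  fix T T' assume T: "T \<in> train_sets X u" and d: "differ_one X T T'"
  then obtain x x' where xx: "x \<in> T" "x' \<in> X - T" "T' = T - {x} \<union> {x'}"
    unfolding differ_one_def by blast
  have "differ_one X (X - T) (X - T')"
    unfolding differ_one_def using xx T by (intro exI[of _ x'] exI[of _ x]) (auto simp: train_sets_def)
  moreover have "X - T \<in> train_sets X m"
    using compl_bij[OF X] T by (auto simp: bij_betw_def)
  ultimately show "\<bar>f (X - T') - f (X - T)\<bar> \<le> c"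
    using bd unfolding bd_diff_def by blast
qed

lemma transpose_train_sets_bij:
  assumes X: "finite X" and ab: "a \<in> X" "b \<in> X"
  shows "bij_betw ((`) (Transposition.transpose a b)) (train_sets (X - {a}) k) (train_sets (X - {b}) k)"
proof -
  have maps: "Transposition.transpose a b ` S \<in> train_sets (X - {b}) k"
    if "S \<in> train_sets (X - {a}) k" "a \<in> X" "b \<in> X" for a b S
  proof -
    have "Transposition.transpose a b ` S \<subseteq> X - {b}"
      using that by (auto simp: train_sets_def Transposition.transpose_def)
    moreover have "card (Transposition.transpose a b ` S) = card S"
      by (simp add: card_image)
    ultimately show ?thesis using that by (simp add: train_sets_def)
  qed
  show ?thesis
  proof (rule bij_betwI[where g = "(`) (Transposition.transpose a b)"])
    show "(`) (Transposition.transpose a b) \<in> train_sets (X - {a}) k \<rightarrow> train_sets (X - {b}) k"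
      using maps ab by blast
    show "(`) (Transposition.transpose a b) \<in> train_sets (X - {b}) k \<rightarrow> train_sets (X - {a}) k"
      using maps[of _ b a] ab by (auto simp: Transposition.transpose_commute)
  qed (simp_all add: image_image)
qed

text \<open>Under the coupling \<open>S \<mapsto> (a b)S\<close>, the sets \<open>S + a\<close> and \<open>(a b)S + b\<close> coincide if
  \<open>b \<in> S\<close> and otherwise differ in exactly one point.\<close>
lemma coupled_difference:
  assumes X: "finite X" and ab: "a \<in> X" "b \<in> X" "a \<noteq> b"
    and bd: "bd_diff X (Suc k) f c" and S: "S \<in> train_sets (X - {a}) k"
  shows "f (insert a S) - f (insert b (Transposition.transpose a b ` S)) \<le> (if b \<in> S then 0 else c)"
proof -
  have aS: "a \<notin> S" and fS: "finite S"
    using S X by (auto simp: train_sets_def intro: finite_subset)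
  show ?thesis
  proof (cases "b \<in> S")
    case True
    have "Transposition.transpose a b ` S = insert a (S - {b})"
    proof (rule set_eqI)
      show "x \<in> Transposition.transpose a b ` S \<longleftrightarrow> x \<in> insert a (S - {b})" for x
        using aS True ab(3) by (cases "x = a"; cases "x = b") (auto simp: in_transpose_image_iff)
    qed
    then have "insert b (Transposition.transpose a b ` S) = insert a S" using True by auto
    then show ?thesis using True by simp
  next
    case False
    have "Transposition.transpose a b ` S = S"
      using aS False by simp
    moreover have "insert a S \<in> train_sets X (Suc k)"
      using S aS fS ab by (auto simp: train_sets_def)
    moreover have "differ_one X (insert a S) (insert b S)"
      unfolding differ_one_def using False aS ab by (intro exI[of _ a] exI[of _ b]) auto
    ultimately show ?thesis
      using False bd unfolding bd_diff_def by fastforce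
  qed
qed

lemma avg_avoiding_point:
  assumes X: "finite X" and ab: "a \<in> X" "b \<in> X" "a \<noteq> b" and k: "Suc k \<le> card X"
  shows "avg (train_sets (X - {a}) k) (\<lambda>S. if b \<in> S then 0 else c)
         = c * real (card X - Suc k) / real (card X - 1)"
proof -
  define N where "N = card X"
  define A where "A = train_sets (X - {a}) k"
  have N2: "N \<ge> 2"
    using card_mono[OF X, of "{a, b}"] ab unfolding N_def by simp
  have finA: "finite A" and cardA: "card A = (N - 1) choose k" and Kpos: "((N - 1) choose k) > 0"
    using X ab k by (simp_all add: A_def train_sets_finite train_sets_card N_def)
  have "{S\<in>A. b \<notin> S} = train_sets (X - {a} - {b}) k"
    by (auto simp: A_def train_sets_def)
  moreover have "card (X - {a} - {b}) = N - 2" using ab X by (simp add: N_def)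
  ultimately have avoid_b: "card {S\<in>A. b \<notin> S} = (N - 2) choose k"
    using X by (simp add: train_sets_card)
  have "(N - 1 - k) * ((N - 1) choose k) = (N - 1) * ((N - 1 - 1) choose k)"
    by (rule binomial_absorb_comp)
  then have "real (N - Suc k) * real ((N - 1) choose k) = real (N - 1) * real ((N - 2) choose k)"
    by (simp add: numeral_2_eq_2 flip: of_nat_mult)
  then have binom: "real ((N - 2) choose k) = real (N - Suc k) * real ((N - 1) choose k) / real (N - 1)"
    using N2 by (simp add: field_simps)
  have "avg A (\<lambda>S. if b \<in> S then 0 else c) = c * real ((N - 2) choose k) / real ((N - 1) choose k)"
    using finA by (simp add: avg_def sum.If_cases cardA Int_def flip: avoid_b)
  also have "\<dots> = c * real (N - Suc k) / real (N - 1)"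
    using Kpos by (simp add: binom)
  finally show ?thesis unfolding A_def N_def .
qed

lemma avg_insert_coupling:
  assumes X: "finite X" and ab: "a \<in> X" "b \<in> X" "a \<noteq> b" and k: "Suc k \<le> card X"
    and bd: "bd_diff X (Suc k) f c"
  shows "avg (train_sets (X - {a}) k) (\<lambda>S. f (insert a S))
         - avg (train_sets (X - {b}) k) (\<lambda>S. f (insert b S))
         \<le> c * real (card X - Suc k) / real (card X - 1)"
proof -
  define A where "A = train_sets (X - {a}) k"
  have "avg A (\<lambda>S. f (insert a S)) - avg (train_sets (X - {b}) k) (\<lambda>S. f (insert b S))
      = avg A (\<lambda>S. f (insert a S) - f (insert b (Transposition.transpose a b ` S)))"
    using avg_reindex[OF transpose_train_sets_bij[OF X ab(1,2), of k], where f="\<lambda>S. f (insert b S)"]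
    by (simp add: avg_diff A_def)
  also have "\<dots> \<le> avg A (\<lambda>S. if b \<in> S then 0 else c)"
    unfolding A_def by (intro avg_mono coupled_difference[OF X ab bd])
  also have "\<dots> = c * real (card X - Suc k) / real (card X - 1)"
    unfolding A_def by (rule avg_avoiding_point[OF X ab k])
  finally show ?thesis unfolding A_def .
qed


subsection \<open>A McDiarmid inequality for sampling without replacement\<close>

text \<open>The variance proxy \<open>\<Sum>\<^sub>j 1/j\<^sup>2\<close> over \<open>N-k \<le> j < N\<close> accumulated by the martingale argument.\<close>
definition inv_sq_sum :: "nat \<Rightarrow> nat \<Rightarrow> real" where
  "inv_sq_sum N k = (\<Sum>j\<in>{N - k..<N}. 1 / (real j)^2)"

lemma inv_sq_sum_Suc:
  assumes "Suc k \<le> N"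
  shows "inv_sq_sum N (Suc k) = 1 / (real (N - 1))^2 + inv_sq_sum (N - 1) k"
proof -
  have "{N - Suc k..<N} = insert (N - 1) {N - 1 - k..<N - 1}" using assms by auto
  then show ?thesis unfolding inv_sq_sum_def by simp
qed

text \<open>Telescoping estimate \<open>1/j\<^sup>2 \<le> 1/(j - 1/2) - 1/(j + 1/2)\<close>, summed over \<open>a \<le> j < b\<close>.\<close>
lemma sum_inv_sq_le:
  assumes "1 \<le> a" "a \<le> b"
  shows "(\<Sum>j\<in>{a..<b}. 1 / (real j)^2) \<le> 1 / (real a - 1/2) - 1 / (real b - 1/2)"
proof -
  define F where "F = (\<lambda>j::nat. - 1 / (real j - 1/2))"
  have "1 / (real j)^2 \<le> F (Suc j) - F j" if "j \<in> {a..<b}" for j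
  proof -
    have j: "real j \<ge> 1" using that assms by simp
    have "F (Suc j) - F j = 1 / (real j - 1/2) - 1 / (real j + 1/2)"
      by (simp add: F_def)
    also have "\<dots> = 1 / ((real j)^2 - 1/4)"
      using j by (simp add: field_simps power2_eq_square)
    finally have diff: "F (Suc j) - F j = 1 / ((real j)^2 - 1/4)" .
    have "(real j)^2 \<ge> 1" using j by simp
    then have "1 / (real j)^2 \<le> 1 / ((real j)^2 - 1/4)"
      using j by (intro divide_left_mono mult_pos_pos) (auto simp: power2_eq_square)
    then show ?thesis unfolding diff .
  qed
  then have "(\<Sum>j\<in>{a..<b}. 1 / (real j)^2) \<le> (\<Sum>j = a..<b. F (Suc j) - F j)"
    by (rule sum_mono)
  also have "\<dots> = F b - F a" using assms(2) by (rule sum_Suc_diff')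
  finally show ?thesis by (simp add: F_def)
qed

lemma inv_sq_sum_le:
  assumes "k < N"
  shows "inv_sq_sum N k \<le> real k / ((real (N - k) - 1/2) * (real N - 1/2))"
proof -
  have "inv_sq_sum N k \<le> 1 / (real (N - k) - 1/2) - 1 / (real N - 1/2)"
    unfolding inv_sq_sum_def using assms by (intro sum_inv_sq_le) auto
  also have "\<dots> = real k / ((real (N - k) - 1/2) * (real N - 1/2))"
    using assms by (simp add: of_nat_diff field_simps)
  finally show ?thesis .
qed

lemma avg_insert_range:
  assumes X: "finite X" and k: "Suc k \<le> card X" and bd: "bd_diff X (Suc k) f c" and c: "c \<ge> 0"
  obtains lo where "\<And>a. a \<in> X \<Longrightarrow> avg (train_sets (X - {a}) k) (\<lambda>S. f (insert a S))
                      \<in> {lo..lo + c * real (card X - Suc k) / real (card X - 1)}"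
proof -
  define g where "g = (\<lambda>a. avg (train_sets (X - {a}) k) (\<lambda>S. f (insert a S)))"
  have "X \<noteq> {}" using k by auto
  then have "Min (g ` X) \<in> g ` X" using X by simp
  then obtain b where b: "b \<in> X" "g b = Min (g ` X)" by auto
  then have b_min: "g b \<le> g a" if "a \<in> X" for a
    using X that by simp
  have "g a \<in> {g b..g b + c * real (card X - Suc k) / real (card X - 1)}" if a: "a \<in> X" for a
  proof (cases "a = b")
    case False
    then show ?thesis
      using avg_insert_coupling[OF X a b(1) False k bd] b_min[OF a] by (simp add: g_def)
  qed (use c in simp)
  then show ?thesis using that unfolding g_def by blast
qed

text \<open>The moment generating function bound, by induction on the size of the training
  set: draw the first point, then apply Hoeffding's lemma to the conditional averages
  and the induction hypothesis to the remaining \<open>k\<close> points.\<close>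
lemma mgf_train_sets:
  assumes "finite X" "k \<le> card X" "bd_diff X k f c" "c \<ge> 0" "l > 0"
  shows "avg (train_sets X k) (\<lambda>S. exp (l * (f S - avg (train_sets X k) f)))
         \<le> exp (l^2 * c^2 * (real (card X - k))^2 * inv_sq_sum (card X) k / 8)"
  using assms
proof (induction k arbitrary: X f)
  case 0
  have "train_sets X 0 = {{}}"
    using 0 by (auto simp: train_sets_def) (metis card_0_eq empty_iff finite_subset)
  then show ?case by (simp add: avg_def inv_sq_sum_def)
next
  case (Suc k)
  note X = Suc.prems(1) and kN = Suc.prems(2) and bd = Suc.prems(3) and c = Suc.prems(4) and l = Suc.prems(5)
  define N where "N = card X"
  define g where "g = (\<lambda>a. avg (train_sets (X - {a}) k) (\<lambda>S. f (insert a S)))"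
  define Q where "Q = exp (l^2 * c^2 * (real (N - Suc k))^2 * inv_sq_sum (N - 1) k / 8)"
  define w where "w = c * real (N - Suc k) / real (N - 1)"
  have Xne: "X \<noteq> {}" using kN by auto
  have mean: "avg (train_sets X (Suc k)) f = avg X g"
    unfolding g_def by (rule avg_train_sets_insert[OF X kN])
  have IH: "avg (train_sets (X - {a}) k) (\<lambda>S. exp (l * (f (insert a S) - g a))) \<le> Q" if a: "a \<in> X" for a
  proof -
    have "card (X - {a}) = N - 1" "k \<le> card (X - {a})" using a X kN by (simp_all add: N_def)
    with Suc.IH[OF _ _ bd_diff_insert[OF X a bd] c l] X show ?thesis
      unfolding g_def Q_def by simp
  qed
  obtain lo where range: "\<And>a. a \<in> X \<Longrightarrow> g a \<in> {lo..lo + w}"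
    using avg_insert_range[OF X kN bd c] unfolding g_def w_def N_def by blast
  have split: "exp (l * (f (insert a S) - avg X g)) = exp (l * (g a - avg X g)) * exp (l * (f (insert a S) - g a))" for a S
    by (simp add: exp_add[symmetric] algebra_simps)
  have "avg (train_sets X (Suc k)) (\<lambda>S. exp (l * (f S - avg X g)))
      = avg X (\<lambda>a. exp (l * (g a - avg X g)) * avg (train_sets (X - {a}) k) (\<lambda>S. exp (l * (f (insert a S) - g a))))"
    unfolding avg_train_sets_insert[OF X kN] split by (simp add: avg_def sum_distrib_left)
  also have "\<dots> \<le> avg X (\<lambda>a. exp (l * (g a - avg X g)) * Q)"
    by (intro avg_mono mult_left_mono IH) auto
  also have "\<dots> \<le> exp (l^2 * w^2 / 8) * Q"
    unfolding avg_mult_const using hoeffding_avg[OF X Xne l range]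
    by (intro mult_right_mono) (auto simp: Q_def)
  also have "\<dots> = exp (l^2 * c^2 * (real (N - Suc k))^2 * inv_sq_sum N (Suc k) / 8)"
    unfolding Q_def w_def inv_sq_sum_Suc[OF kN[folded N_def]]
    by (simp add: exp_add[symmetric] field_simps power2_eq_square)
  finally show ?case unfolding mean N_def .
qed

lemma mcdiarmid_train_sets:
  assumes X: "finite X" "card X = N" and k: "1 \<le> k" "k < N"
    and bd: "bd_diff X k f c" and c: "c > 0" and e: "\<epsilon> > 0"
  shows "real (card {S\<in>train_sets X k. f S - avg (train_sets X k) f \<ge> \<epsilon>})
         \<le> exp (- 2 * \<epsilon>^2 / (c^2 * (real k * (real (N - k))^2 / ((real (N - k) - 1/2) * (real N - 1/2)))))
           * real (card (train_sets X k))"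
proof -
  define T where "T = train_sets X k"
  define W where "W = c^2 * (real k * (real (N - k))^2 / ((real (N - k) - 1/2) * (real N - 1/2)))"
  define l where "l = 4 * \<epsilon> / W"
  have W: "W > 0" unfolding W_def using c k by simp
  have l: "l > 0" unfolding l_def using e W by simp
  have "c^2 * (real (N - k))^2 * inv_sq_sum N k
      \<le> c^2 * (real (N - k))^2 * (real k / ((real (N - k) - 1/2) * (real N - 1/2)))"
    by (intro mult_left_mono inv_sq_sum_le k) auto
  then have proxy: "c^2 * (real (N - k))^2 * inv_sq_sum N k \<le> W"
    unfolding W_def by (simp add: ac_simps)
  have "avg T (\<lambda>S. exp (l * (f S - avg T f))) \<le> exp (l^2 * c^2 * (real (N - k))^2 * inv_sq_sum N k / 8)"
    using mgf_train_sets[OF X(1) _ bd c[THEN less_imp_le] l] X k unfolding T_def by simp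
  also have "\<dots> \<le> exp (l^2 * W / 8)"
    using proxy mult_left_mono[OF proxy, of "l^2"] by (simp add: mult.assoc)
  finally have mgf: "avg T (\<lambda>S. exp (l * (f S - avg T f))) \<le> exp (l^2 * W / 8)" .
  have "real (card {S\<in>T. f S - avg T f \<ge> \<epsilon>})
      \<le> avg T (\<lambda>S. exp (l * (f S - avg T f))) * real (card T) * exp (- l * \<epsilon>)"
    using X(1) l by (intro chernoff_count) (simp_all add: T_def train_sets_finite)
  also have "\<dots> \<le> exp (l^2 * W / 8) * real (card T) * exp (- l * \<epsilon>)"
    by (intro mult_right_mono mgf) auto
  also have "\<dots> = exp (l^2 * W / 8 - l * \<epsilon>) * real (card T)"
  proof -
    have "exp (l^2 * W / 8 - l * \<epsilon>) = exp (l^2 * W / 8) * exp (- l * \<epsilon>)"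
      by (simp add: exp_add[symmetric])
    then show ?thesis by (simp only: mult_ac)
  qed
  also have "l^2 * W / 8 - l * \<epsilon> = - 2 * \<epsilon>^2 / W"
    unfolding l_def using W by (simp add: field_simps power2_eq_square)
  finally show ?thesis unfolding T_def W_def .
qed

text \<open>The constant \<open>\<alpha>(m,u)\<close> is symmetric and, written with the smaller side \<open>m\<close>, is
  exactly the exponent constant of the McDiarmid inequality above.\<close>
lemma alpha_sym: "alpha m u = alpha u m"
  by (simp add: alpha_def max.commute mult.commute add.commute)

lemma alpha_small_side:
  assumes "1 \<le> m" "m \<le> u"
  shows "alpha m u = real m * (real u)^2 / ((real u - 1/2) * (real (m + u) - 1/2))"
proof -
  have u: "real u \<ge> 1" using assms by simp
  have "1 - 1 / (2 * real u) = (2 * real u - 1) / (2 * real u)"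
    using u by (simp add: field_simps)
  then have inv: "1 / (1 - 1 / (2 * real u)) = 2 * real u / (2 * real u - 1)"
    using u by simp
  have max: "max m u = u" using assms by simp
  have "real m + real u - 1/2 \<noteq> 0" "2 * real u - 1 \<noteq> 0" using u by simp_all
  then show ?thesis
    unfolding alpha_def max inv by (simp add: field_simps power2_eq_square)
qed

text \<open>McDiarmid's inequality with the constant \<open>\<alpha>(m,u)\<close>: when the training set is the
  larger side, apply the inequality to the complementary test set.\<close>
lemma mcdiarmid_alpha:
  assumes X: "finite X" "card X = m + u" and mu: "1 \<le> m" "1 \<le> u"
    and bd: "bd_diff X m f c" and c: "c > 0" and e: "\<epsilon> > 0"
  shows "real (card {S\<in>train_sets X m. f S - avg (train_sets X m) f \<ge> \<epsilon>})
         \<le> exp (- 2 * \<epsilon>^2 / (c^2 * alpha m u)) * real (card (train_sets X m))"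
proof (cases "m \<le> u")
  case True
  have "m < m + u" using mu by simp
  from mcdiarmid_train_sets[OF X mu(1) this bd c e] show ?thesis
    by (simp add: alpha_small_side[OF mu(1) True])
next
  case False
  define g where "g = (\<lambda>T. f (X - T))"
  define P where "P = (\<lambda>S. f S - avg (train_sets X m) f \<ge> \<epsilon>)"
  have bij: "bij_betw (\<lambda>T. X - T) (train_sets X u) (train_sets X m)"
    by (rule compl_bij[OF X])
  have X': "card X = u + m" and uN: "u < u + m" using X mu by simp_all
  from mcdiarmid_train_sets[OF X(1) X' mu(2) uN bd_diff_compl[OF X bd, folded g_def] c e]
  have "real (card {T\<in>train_sets X u. g T - avg (train_sets X u) g \<ge> \<epsilon>})
        \<le> exp (- 2 * \<epsilon>^2 / (c^2 * alpha u m)) * real (card (train_sets X u))"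
    using False by (simp add: alpha_small_side[OF mu(2)])
  moreover have "avg (train_sets X u) g = avg (train_sets X m) f"
    unfolding g_def by (rule avg_reindex[OF bij])
  moreover have "card {T\<in>train_sets X u. P (X - T)} = card {S\<in>train_sets X m. P S}"
    by (rule card_filter_reindex[OF bij])
  ultimately show ?thesis
    using bij_betw_same_card[OF bij] by (simp add: alpha_sym g_def P_def)
qed


subsection \<open>The generalisation gap of a cost-stable algorithm\<close>

lemma cost_bounded:
  assumes "bounded_hyp y X H B" "h \<in> H" "z \<in> X"
  shows "0 \<le> cost y h z" "cost y h z \<le> B^2"
proof -
  have "\<bar>h z - y z\<bar> \<le> B" using assms unfolding bounded_hyp_def by blast
  then have "\<bar>h z - y z\<bar>^2 \<le> B^2" by (intro power_mono) auto
  then show "0 \<le> cost y h z" "cost y h z \<le> B^2" unfolding cost_def by simp_all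
qed

lemma cost_stableD:
  assumes "cost_stable y X m L \<beta>" "S \<in> train_sets X m" "differ_one X S S'" "z \<in> X"
  shows "\<bar>cost y (L S') z - cost y (L S) z\<bar> \<le> \<beta>"
  using assms unfolding cost_stable_def by blast

lemma cost_stable_nonneg:
  assumes X: "finite X" "card X = m + u" and mu: "1 \<le> m" "1 \<le> u"
    and cs: "cost_stable y X m L \<beta>"
  shows "\<beta> \<ge> 0"
proof -
  obtain S where S: "S \<in> train_sets X m"
    using train_sets_nonempty[OF X(1), of m] X by auto
  have "card S \<ge> 1" "card (X - S) \<ge> 1"
    using train_setD(3,4)[OF X(1) S] X mu by auto
  then have "S \<noteq> {}" "X - S \<noteq> {}"
    by (metis card.empty not_one_le_zero)+
  then obtain x x' where x: "x \<in> S" and x': "x' \<in> X - S" by blast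
  have "differ_one X S (S - {x} \<union> {x'})" unfolding differ_one_def using x x' by blast
  from cost_stableD[OF cs S this, of x] show ?thesis
    using x train_setD(1)[OF X(1) S] by auto
qed

lemma avg_swap_one:
  assumes P: "finite P" "p \<in> P" and Q: "q \<in> Q" "P - {p} = Q - {q}"
    and FG: "\<And>z. z \<in> P - {p} \<Longrightarrow> \<bar>F z - G z\<bar> \<le> b" and b: "b \<ge> 0"
    and D: "0 \<le> F p" "F p \<le> D" "0 \<le> G q" "G q \<le> D"
  shows "\<bar>sum F P / real (card P) - sum G Q / real (card Q)\<bar> \<le> b + D / real (card P)"
proof -
  define A where "A = P - {p}"
  define n where "n = real (card P)"
  have A_alt: "A = Q - {q}" unfolding A_def by (rule Q(2))
  have "finite A" "p \<notin> A" "P = insert p A"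
    using P unfolding A_def by (simp_all add: insert_absorb)
  moreover have "q \<notin> A" "Q = insert q A"
    using Q(1) unfolding A_alt by (simp_all add: insert_absorb)
  ultimately have A: "finite A" "p \<notin> A" "q \<notin> A" "P = insert p A" "Q = insert q A"
    by simp_all
  have n: "n > 0" "card Q = card P" "real (card A) \<le> n"
    unfolding n_def A(4,5) using A(1-3) by simp_all
  have "\<bar>\<Sum>z\<in>A. F z - G z\<bar> \<le> (\<Sum>z\<in>A. \<bar>F z - G z\<bar>)" by (rule sum_abs)
  also have "\<dots> \<le> (\<Sum>z\<in>A. b)" using FG unfolding A_def by (rule sum_mono)
  also have "\<dots> \<le> n * b" using n(3) b by (simp add: mult_right_mono)
  finally have common: "\<bar>\<Sum>z\<in>A. F z - G z\<bar> \<le> n * b" .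
  have "sum F P - sum G Q = (\<Sum>z\<in>A. F z - G z) + (F p - G q)"
    using A by (simp add: sum_subtractf)
  moreover have "\<bar>F p - G q\<bar> \<le> D" using D by auto
  ultimately have "\<bar>sum F P - sum G Q\<bar> \<le> n * b + D"
    using common by linarith
  then have "\<bar>sum F P - sum G Q\<bar> / n \<le> (n * b + D) / n"
    using n by (intro divide_right_mono) auto
  then show ?thesis
    using n by (simp add: n_def diff_divide_distrib[symmetric] field_simps)
qed

text \<open>Exchanging one training point changes the training and the test error by at most
  \<open>\<beta> + B\<^sup>2/m\<close> resp. \<open>\<beta> + B\<^sup>2/u\<close>: all costs move by at most \<open>\<beta>\<close>, and the exchanged term
  of each average lies in \<open>[0, B\<^sup>2]\<close>.\<close>
lemma exchange_errors:
  assumes X: "finite X" and S: "S \<in> train_sets X m" and d: "differ_one X S S'"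
    and stab: "\<And>z. z \<in> X \<Longrightarrow> \<bar>cost y h' z - cost y h z\<bar> \<le> \<beta>" and \<beta>: "\<beta> \<ge> 0"
    and cost: "\<And>z. z \<in> X \<Longrightarrow> 0 \<le> cost y h z" "\<And>z. z \<in> X \<Longrightarrow> cost y h z \<le> B^2"
    and cost': "\<And>z. z \<in> X \<Longrightarrow> 0 \<le> cost y h' z" "\<And>z. z \<in> X \<Longrightarrow> cost y h' z \<le> B^2"
  shows "\<bar>train_err y S' h' - train_err y S h\<bar> \<le> \<beta> + B^2 / real m"
    and "\<bar>test_err y X S' h' - test_err y X S h\<bar> \<le> \<beta> + B^2 / real (card X - m)"
proof -
  obtain x x' where xx: "x \<in> S" "x' \<in> X - S" "S' = S - {x} \<union> {x'}"
    using d unfolding differ_one_def by blast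
  have S': "S' \<in> train_sets X m" by (rule differ_one_train_sets[OF X S d])
  have xX: "x \<in> X" "x' \<in> X" and x'S: "x' \<notin> S" and "x \<noteq> x'"
    using train_setD(1)[OF X S] xx by auto
  have "\<bar>sum (cost y h') S' / real (card S') - sum (cost y h) S / real (card S)\<bar>
        \<le> \<beta> + B^2 / real (card S')"
  proof (rule avg_swap_one)
    show "finite S'" by (rule train_setD(2)[OF X S'])
    show "S' - {x'} = S - {x}" using xx x'S by auto
    show "\<bar>cost y h' z - cost y h z\<bar> \<le> \<beta>" if "z \<in> S' - {x'}" for z
      using stab that train_setD(1)[OF X S'] by blast
  qed (use xx xX \<beta> cost cost' in simp_all)
  then show "\<bar>train_err y S' h' - train_err y S h\<bar> \<le> \<beta> + B^2 / real m"
    unfolding train_err_def using train_setD(3)[OF X S] train_setD(3)[OF X S'] by simp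
  have "\<bar>sum (cost y h') (X - S') / real (card (X - S'))
          - sum (cost y h) (X - S) / real (card (X - S))\<bar>
        \<le> \<beta> + B^2 / real (card (X - S'))"
  proof (rule avg_swap_one)
    show "finite (X - S')" using X by simp
    show "(X - S') - {x} = (X - S) - {x'}" using xx by auto
    show "\<bar>cost y h' z - cost y h z\<bar> \<le> \<beta>" if "z \<in> X - S' - {x}" for z
      using stab that by blast
  qed (use xx xX x'S \<open>x \<noteq> x'\<close> \<beta> cost cost' in simp_all)
  then show "\<bar>test_err y X S' h' - test_err y X S h\<bar> \<le> \<beta> + B^2 / real (card X - m)"
    unfolding test_err_def using train_setD(4)[OF X S] train_setD(4)[OF X S'] by simp
qed

lemma gap_bounded_diff:
  assumes X: "finite X" "card X = m + u" and mu: "1 \<le> m" "1 \<le> u"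
    and bh: "bounded_hyp y X H B" and LH: "\<And>S. S \<in> train_sets X m \<Longrightarrow> L S \<in> H"
    and cs: "cost_stable y X m L \<beta>"
  shows "bd_diff X m (\<lambda>S. test_err y X S (L S) - train_err y S (L S))
           (2 * \<beta> + B^2 / real m + B^2 / real u)"
  unfolding bd_diff_def
proof (intro ballI allI impI)
  fix S S' assume S: "S \<in> train_sets X m" and d: "differ_one X S S'"
  have S': "S' \<in> train_sets X m" by (rule differ_one_train_sets[OF X(1) S d])
  note errs = exchange_errors[OF X(1) S d cost_stableD[OF cs S d] cost_stable_nonneg[OF X mu cs]
      cost_bounded[OF bh LH[OF S]] cost_bounded[OF bh LH[OF S']]]
  show "\<bar>(test_err y X S' (L S') - train_err y S' (L S'))
          - (test_err y X S (L S) - train_err y S (L S))\<bar>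
        \<le> 2 * \<beta> + B^2 / real m + B^2 / real u"
    using errs X(2) by simp
qed


lemma sum_Sigma_first:
  assumes "finite T" "\<And>S. S \<in> T \<Longrightarrow> finite (P S)" "\<And>S. S \<in> T \<Longrightarrow> finite (Q S)"
  shows "(\<Sum>t\<in>(SIGMA S:T. P S \<times> Q S). g (fst t) (fst (snd t)))
       = (\<Sum>S\<in>T. real (card (Q S)) * (\<Sum>x\<in>P S. g S x))"
proof -
  have "(\<Sum>t\<in>(SIGMA S:T. P S \<times> Q S). g (fst t) (fst (snd t)))
      = (\<Sum>S\<in>T. \<Sum>xz\<in>P S \<times> Q S. g S (fst xz))"
    using assms by (subst sum.Sigma) (auto simp: split_beta)
  also have "\<dots> = (\<Sum>S\<in>T. \<Sum>x\<in>P S. \<Sum>z\<in>Q S. g S x)"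
    by (intro sum.cong refl) (simp only: sum.cartesian_product split_def)
  also have "\<dots> = (\<Sum>S\<in>T. real (card (Q S)) * (\<Sum>x\<in>P S. g S x))"
    by (simp add: sum_distrib_left mult.commute)
  finally show ?thesis .
qed

lemma swap_triples_bij:
  assumes X: "finite X"
  shows "bij_betw (\<lambda>(S, x, x0). (insert x (S - {x0}), x, x0))
           (SIGMA S:train_sets X k. (X - S) \<times> S) (SIGMA S:train_sets X k. S \<times> (X - S))"
proof (rule bij_betwI[where g = "\<lambda>(S, x, x0). (insert x0 (S - {x}), x, x0)"])
  have swap: "insert x (S - {x0}) \<in> train_sets X k"
    if "S \<in> train_sets X k" "x0 \<in> S" "x \<in> X - S" for S x x0
  proof (rule differ_one_train_sets[OF X that(1)])
    show "differ_one X S (insert x (S - {x0}))" unfolding differ_one_def using that by blast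
  qed
  show "(\<lambda>(S, x, x0). (insert x (S - {x0}), x, x0))
          \<in> (SIGMA S:train_sets X k. (X - S) \<times> S) \<rightarrow> (SIGMA S:train_sets X k. S \<times> (X - S))"
    using swap train_setD(1)[OF X] by fastforce
  show "(\<lambda>(S, x, x0). (insert x0 (S - {x}), x, x0))
          \<in> (SIGMA S:train_sets X k. S \<times> (X - S)) \<rightarrow> (SIGMA S:train_sets X k. (X - S) \<times> S)"
    using swap train_setD(1)[OF X] by fastforce
qed auto

text \<open>Double counting over all swaps: by stability, the total test cost is at most the
  total training cost plus \<open>\<beta>\<close> per swap.\<close>
lemma swap_double_count:
  assumes X: "finite X" "card X = m + u" and cs: "cost_stable y X m L \<beta>"
  defines "TS \<equiv> train_sets X m"
  shows "real m * (\<Sum>S\<in>TS. \<Sum>x\<in>X - S. cost y (L S) x)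
         \<le> real u * (\<Sum>S\<in>TS. \<Sum>x\<in>S. cost y (L S) x) + real u * real m * \<beta> * real (card TS)"
proof -
  define c where "c = (\<lambda>S. cost y (L S))"
  define A where "A = (SIGMA S:TS. (X - S) \<times> S)"
  define B where "B = (SIGMA S:TS. S \<times> (X - S))"
  define sw where "sw = (\<lambda>(S::'a set, x::'a, x0::'a). (insert x (S - {x0}), x, x0))"
  have fin: "finite TS" "\<And>S. S \<in> TS \<Longrightarrow> finite S" "\<And>S. S \<in> TS \<Longrightarrow> finite (X - S)"
    using X(1) train_setD(2)[OF X(1)] by (auto simp: TS_def train_sets_finite)
  have card: "card S = m" "card (X - S) = u" if "S \<in> TS" for S
    using train_setD(3,4)[OF X(1) that[unfolded TS_def]] X(2) by simp_all
  have "real m * (\<Sum>S\<in>TS. \<Sum>x\<in>X - S. c S x) = (\<Sum>S\<in>TS. real (card S) * (\<Sum>x\<in>X - S. c S x))"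
    using card by (simp add: sum_distrib_left)
  also have "\<dots> = (\<Sum>t\<in>A. c (fst t) (fst (snd t)))"
    unfolding A_def by (rule sum_Sigma_first[OF fin(1,3,2), symmetric])
  also have "\<dots> \<le> (\<Sum>t\<in>A. c (fst (sw t)) (fst (snd (sw t))) + \<beta>)"
  proof (rule sum_mono)
    fix t assume "t \<in> A"
    then obtain S x x0 where t: "t = (S, x, x0)" "S \<in> TS" "x \<in> X - S" "x0 \<in> S"
      unfolding A_def by auto
    have "differ_one X S (insert x (S - {x0}))" unfolding differ_one_def using t by blast
    from cost_stableD[OF cs _ this, of x] t
    show "c (fst t) (fst (snd t)) \<le> c (fst (sw t)) (fst (snd (sw t))) + \<beta>"
      by (auto simp: c_def sw_def TS_def)
  qed
  also have "\<dots> = (\<Sum>t\<in>B. c (fst t) (fst (snd t)) + \<beta>)"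
    using sum.reindex_bij_betw[OF swap_triples_bij[OF X(1), of m],
        where g="\<lambda>t. c (fst t) (fst (snd t)) + \<beta>"]
    by (simp add: sw_def A_def B_def TS_def)
  also have "\<dots> = (\<Sum>t\<in>B. c (fst t) (fst (snd t))) + \<beta> * real (card B)"
    by (simp add: sum.distrib)
  also have "(\<Sum>t\<in>B. c (fst t) (fst (snd t))) = (\<Sum>S\<in>TS. real (card (X - S)) * (\<Sum>x\<in>S. c S x))"
    unfolding B_def by (rule sum_Sigma_first[OF fin])
  also have "\<dots> = real u * (\<Sum>S\<in>TS. \<Sum>x\<in>S. c S x)"
    using card by (simp add: sum_distrib_left)
  also have "card B = card TS * (m * u)"
    unfolding B_def using fin card by (simp add: card_SigmaI card_cartesian_product)
  finally show ?thesis unfolding c_def by (simp add: algebra_simps)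
qed

lemma avg_gap_le:
  assumes X: "finite X" "card X = m + u" and mu: "1 \<le> m" "1 \<le> u"
    and cs: "cost_stable y X m L \<beta>"
  shows "avg (train_sets X m) (\<lambda>S. test_err y X S (L S) - train_err y S (L S)) \<le> \<beta>"
proof -
  define TS where "TS = train_sets X m"
  have cT: "real (card TS) > 0"
    using train_sets_finite[OF X(1)] train_sets_nonempty[OF X(1), of m] X
    by (simp add: TS_def card_gt_0_iff)
  have "avg TS (\<lambda>S. test_err y X S (L S) - train_err y S (L S))
      = ((\<Sum>S\<in>TS. \<Sum>x\<in>X - S. cost y (L S) x) / real u - (\<Sum>S\<in>TS. \<Sum>x\<in>S. cost y (L S) x) / real m)
        / real (card TS)"
    unfolding avg_def test_err_def train_err_def using train_setD(3,4)[OF X(1)] X(2)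
    by (simp add: TS_def sum_subtractf sum_divide_distrib)
  also have "\<dots> \<le> \<beta>"
    using swap_double_count[OF X cs, folded TS_def] mu cT
    by (simp add: divide_le_eq field_simps)
  finally show ?thesis unfolding TS_def .
qed


lemma alpha_pos:
  assumes "1 \<le> m" "1 \<le> u"
  shows "alpha m u > 0"
proof -
  have "real (max m u) \<ge> 1" using assms by simp
  then have "1 - 1 / (2 * real (max m u)) > 0" by (simp add: field_simps)
  moreover have "real m * real u / (real m + real u - 1/2) > 0" using assms by simp
  ultimately show ?thesis unfolding alpha_def by (intro mult_pos_pos) auto
qed

text \<open>The deviation \<open>\<epsilon> = C \<surd>(\<alpha> ln(1/\<delta>)/2)\<close> is chosen so that the tail bound equals \<open>\<delta>\<close>.\<close>
lemma tail_at_deviation: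
  assumes "C > 0" "a > 0" "0 < \<delta>" "\<delta> < 1"
  shows "exp (- 2 * (C * sqrt (a * ln (1 / \<delta>) / 2))^2 / (C^2 * a)) = \<delta>"
proof -
  have "ln (1 / \<delta>) > 0" using assms by simp
  then have "(C * sqrt (a * ln (1 / \<delta>) / 2))^2 = C^2 * (a * ln (1 / \<delta>) / 2)"
    using assms by (simp add: power_mult_distrib)
  then have "- 2 * (C * sqrt (a * ln (1 / \<delta>) / 2))^2 / (C^2 * a) = ln \<delta>"
    using assms by (simp add: field_simps ln_div)
  then show ?thesis using assms by simp
qed

lemma prob_pmf_of_set_ge:
  assumes T: "finite T" "T \<noteq> {}" and sub: "{x\<in>T. x \<notin> E} \<subseteq> Bad" "Bad \<subseteq> T"
    and bad: "real (card Bad) \<le> \<delta> * real (card T)"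
  shows "measure_pmf.prob (pmf_of_set T) E \<ge> 1 - \<delta>"
proof -
  have "card {x\<in>T. x \<notin> E} \<le> card Bad"
    using sub T(1) by (intro card_mono) (auto intro: finite_subset)
  moreover have "T \<inter> E = T - {x\<in>T. x \<notin> E}" by blast
  then have "real (card (T \<inter> E)) = real (card T) - real (card {x\<in>T. x \<notin> E})"
    using T(1) by (simp add: card_Diff_subset of_nat_diff card_mono)
  ultimately have "real (card (T \<inter> E)) \<ge> (1 - \<delta>) * real (card T)"
    using bad by (simp add: algebra_simps)
  moreover have "real (card T) > 0" using T by (simp add: card_gt_0_iff)
  ultimately show ?thesis
    using measure_pmf_of_set[OF T(2,1), of E] by (simp add: le_divide_eq)
qed

theorem theorem8:
  fixes X :: "'a set" and y :: "'a \<Rightarrow> real" and m u :: nat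
    and H :: "('a \<Rightarrow> real) set" and B \<beta> \<delta> :: real
    and L :: "'a set \<Rightarrow> 'a \<Rightarrow> real"
  assumes "finite X" and "card X = m + u" and "m \<ge> 1" and "u \<ge> 1"
    and "B > 0" and "bounded_hyp y X H B"
    and "\<And>S. S \<in> train_sets X m \<Longrightarrow> L S \<in> H"
    and "cost_stable y X m L \<beta>"
    and "\<delta> > 0"
  shows "measure_pmf.prob (pmf_of_set (train_sets X m))
           {S. test_err y X S (L S) \<le> train_err y S (L S) + \<beta>
                + (2 * \<beta> + B^2 * (real m + real u) / (real m * real u))
                  * sqrt (alpha m u * ln (1 / \<delta>) / 2)}
         \<ge> 1 - \<delta>"
proof (cases "\<delta> < 1")
  case False
  then show ?thesis by (meson diff_le_0_iff_le measure_nonneg not_le order_trans)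
next
  case True
  note X = assms(1,2) and mu = assms(3,4)
  define TS where "TS = train_sets X m"
  define \<Phi> where "\<Phi> = (\<lambda>S. test_err y X S (L S) - train_err y S (L S))"
  define C where "C = 2 * \<beta> + B^2 * (real m + real u) / (real m * real u)"
  define \<epsilon> where "\<epsilon> = C * sqrt (alpha m u * ln (1 / \<delta>) / 2)"
  have "B^2 * (real m + real u) / (real m * real u) > 0" using mu assms(5) by simp
  then have C: "C = 2 * \<beta> + B^2 / real m + B^2 / real u" "C > 0"
    using mu cost_stable_nonneg[OF X mu assms(8)] unfolding C_def by (simp add: field_simps, linarith)
  have \<epsilon>: "\<epsilon> > 0" unfolding \<epsilon>_def using C(2) alpha_pos[OF mu] True assms(9) by simp
  have tail: "real (card {S\<in>TS. \<Phi> S - avg TS \<Phi> \<ge> \<epsilon>}) \<le> \<delta> * real (card TS)"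
    using mcdiarmid_alpha[OF X mu gap_bounded_diff[OF X mu assms(6-8), folded C(1) \<Phi>_def] C(2) \<epsilon>]
      tail_at_deviation[OF C(2) alpha_pos[OF mu] assms(9) True]
    unfolding TS_def \<epsilon>_def by simp
  have "{S\<in>TS. S \<notin> {S. test_err y X S (L S) \<le> train_err y S (L S) + \<beta> + \<epsilon>}}
        \<subseteq> {S\<in>TS. \<Phi> S - avg TS \<Phi> \<ge> \<epsilon>}"
    using avg_gap_le[OF X mu assms(8)] unfolding TS_def \<Phi>_def by auto
  from prob_pmf_of_set_ge[OF _ _ this _ tail] show ?thesis
    using train_sets_finite[OF X(1)] train_sets_nonempty[OF X(1), of m] X
    unfolding TS_def \<epsilon>_def C_def by auto
qed

end
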